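(* Let $0<f_1<f_2<f_3$ and $2h=1$. For values $(f_L,g_L)$ with $f_L<1$ in the image of the reduced Lamé momentum map $(F_L,G_L):M_h\to\mathbb R^2$, set $r_2=g_L/(1-f_L)$ and define $$p_1(s)^2=\frac{f_L-s}{4(s-1)^2s},\qquad p_k(s)^2=-\frac{(f_L-1)s+g_L}{4(f_3-s)(s-f_1)(s-f_2)}\ (k=2,3),$$ $$J_1=\frac2\pi\int_0^{f_L}p_1\,ds,\quad J_2=\frac2\pi\int_{f_1}^{\min(r_2,f_2)}p_2\,ds,\quad J_3=\frac2\pi\int_{\max(f_2,r_2)}^{f_3}p_3\,ds.$$ Then for each fixed $r_2$, the points of the image of the momentum map lying on the straight line $F_L=1-\frac{1}{r_2}G_L$ are mapped by $(J_1,J_2,J_3)$ into a straight line in action space $\mathbb R^3$.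
   Context: $\mathbf L=(\ell_{12},\ell_{13},\ell_{14},\ell_{23},\ell_{24},\ell_{34})\in\mathbb R^6$; $M_h=\{\mathbf L:\sum_{i<j}\ell_{ij}^2=2h,\ \ell_{12}\ell_{34}-\ell_{13}\ell_{24}+\ell_{14}\ell_{23}=0\}\cong S^2\times S^2$ is a symplectic leaf of $\mathfrak{so}(4)^*$ (Lie–Poisson bracket). The reduced Lamé system is $F_L=\ell_{12}^2+\ell_{13}^2+\ell_{14}^2$, $G_L=f_1\ell_{34}^2+f_2\ell_{24}^2+f_3\ell_{23}^2$. The $J_i$ are its (continuous) action variables, obtained from separation of the geodesic flow on $S^3$ in Lamé coordinates; the radicands are nonnegative on the integration intervals. *)

theory Defs
  imports "HOL-Analysis.Analysis"
begin

text \<open>A point L = (l12,l13,l14,l23,l24,l34) of so(4)^* = R^6, as a 6-tuple.\<close>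
type_synonym so4 = "real \<times> real \<times> real \<times> real \<times> real \<times> real"

definition M_h :: "real \<Rightarrow> so4 set" where
  "M_h h = {(l12,l13,l14,l23,l24,l34).
      l12^2 + l13^2 + l14^2 + l23^2 + l24^2 + l34^2 = 2*h \<and>
      l12*l34 - l13*l24 + l14*l23 = 0}"

definition F_L :: "so4 \<Rightarrow> real" where
  "F_L L = (case L of (l12,l13,l14,l23,l24,l34) \<Rightarrow> l12^2 + l13^2 + l14^2)"

definition G_L :: "real \<Rightarrow> real \<Rightarrow> real \<Rightarrow> so4 \<Rightarrow> real" where
  "G_L f1 f2 f3 L = (case L of (l12,l13,l14,l23,l24,l34) \<Rightarrow>
      f1*l34^2 + f2*l24^2 + f3*l23^2)"

definition lame_image :: "real \<Rightarrow> real \<Rightarrow> real \<Rightarrow> real \<Rightarrow> (real \<times> real) set" where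
  "lame_image f1 f2 f3 h = (\<lambda>L. (F_L L, G_L f1 f2 f3 L)) ` M_h h"

text \<open>p_1 and p_2 = p_3 as (nonnegative) square roots of the given radicands.\<close>
definition p1 :: "real \<Rightarrow> real \<Rightarrow> real" where
  "p1 fL s = sqrt ((fL - s) / (4 * (s - 1)^2 * s))"

definition p23 :: "real \<Rightarrow> real \<Rightarrow> real \<Rightarrow> real \<Rightarrow> real \<Rightarrow> real \<Rightarrow> real" where
  "p23 f1 f2 f3 fL gL s = sqrt (- ((fL - 1) * s + gL) / (4 * (f3 - s) * (s - f1) * (s - f2)))"

definition J1 :: "real \<Rightarrow> real" where
  "J1 fL = 2 / pi * integral {0..fL} (p1 fL)"

definition J2 :: "real \<Rightarrow> real \<Rightarrow> real \<Rightarrow> real \<Rightarrow> real \<Rightarrow> real" where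
  "J2 f1 f2 f3 fL gL = 2 / pi *
     integral {f1..min (gL / (1 - fL)) f2} (p23 f1 f2 f3 fL gL)"

definition J3 :: "real \<Rightarrow> real \<Rightarrow> real \<Rightarrow> real \<Rightarrow> real \<Rightarrow> real" where
  "J3 f1 f2 f3 fL gL = 2 / pi *
     integral {max f2 (gL / (1 - fL))..f3} (p23 f1 f2 f3 fL gL)"

definition J_map :: "real \<Rightarrow> real \<Rightarrow> real \<Rightarrow> real \<Rightarrow> real \<Rightarrow> real \<times> real \<times> real" where
  "J_map f1 f2 f3 fL gL = (J1 fL, J2 f1 f2 f3 fL gL, J3 f1 f2 f3 fL gL)"

end

theory Submission
  imports Defs
begin

(* On the line g_L = r2 (1 - f_L) the radicand of p_2 = p_3 is (1 - f_L) times its value at the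
   point (f_L, g_L) = (0, r2), and the integration limits depend on r2 only; so J_2 and J_3 are
   sqrt (1 - f_L) times their values at (0, r2). The integral J_1 depends on f_L alone and equals
   1 - sqrt (1 - f_L), because
     arcsin (sqrt (s / a)) - sqrt (1 - a) * arcsin (sqrt ((1 - a) s / (a (1 - s))))
   is a primitive of p_1 on (0, a). Hence
     (J_1, J_2, J_3) = (1, 0, 0) + sqrt (1 - f_L) (-1, J_2 (0, r2), J_3 (0, r2)).
   Neither the ordering of the f_i nor the value of h is needed. *)

lemma DERIV_arcsin_sqrt:
  assumes g: "(g has_real_derivative g') (at x)" and "0 < g x" "g x < 1"
  shows "((\<lambda>s. arcsin (sqrt (g s))) has_real_derivative g' / (2 * sqrt (g x * (1 - g x)))) (at x)"
proof -
  have "sqrt (g x) < 1" "- 1 < sqrt (g x)"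
    using assms by (auto intro: less_le_trans[OF _ real_sqrt_ge_zero])
  then have "((\<lambda>s. arcsin (sqrt (g s))) has_real_derivative
          inverse (sqrt (1 - (sqrt (g x))\<^sup>2)) * (inverse (sqrt (g x)) / 2 * g')) (at x)"
    using assms by (intro DERIV_chain2[OF DERIV_arcsin DERIV_chain2[OF DERIV_real_sqrt g]]) auto
  moreover have "inverse (sqrt (1 - (sqrt (g x))\<^sup>2)) * (inverse (sqrt (g x)) / 2 * g')
      = g' / (2 * sqrt (g x * (1 - g x)))"
  proof -
    have "sqrt (g x * (1 - g x)) = sqrt (g x) * sqrt (1 - g x)"
      by (rule real_sqrt_mult)
    then show ?thesis
      using assms by (simp add: field_simps)
  qed
  ultimately show ?thesis by (simp only:)
qed

definition p1_primitive :: "real \<Rightarrow> real \<Rightarrow> real" where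
  "p1_primitive a s =
     arcsin (sqrt (s / a)) - sqrt (1 - a) * arcsin (sqrt ((1 - a) * s / (a * (1 - s))))"

lemma p1_primitive_0 [simp]: "p1_primitive a 0 = 0"
  by (simp add: p1_primitive_def)

lemma p1_primitive_self:
  assumes "0 < a" "a < 1"
  shows "p1_primitive a a = pi / 2 * (1 - sqrt (1 - a))"
  using assms by (simp add: p1_primitive_def algebra_simps)

lemma continuous_on_p1_primitive:
  assumes "0 < a" "a < 1"
  shows "continuous_on {0..a} (p1_primitive a)"
proof -
  have "0 \<le> (1 - a) * s / (a * (1 - s))" "(1 - a) * s / (a * (1 - s)) \<le> 1"
    if "s \<in> {0..a}" for s
    using assms that mult_right_mono[of a 1 s] by (auto simp: divide_simps algebra_simps)
  then show ?thesis
    unfolding p1_primitive_def using assms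
    by (intro continuous_intros) (auto simp: divide_simps intro: order_trans[OF _ real_sqrt_ge_zero])
qed

lemma p1_eq:
  assumes "0 < s" "s < a" "a < 1"
  shows "p1 a s = (a - s) / (2 * (1 - s) * sqrt (s * (a - s)))"
  unfolding p1_def
proof (rule real_sqrt_unique)
  show "((a - s) / (2 * (1 - s) * sqrt (s * (a - s))))\<^sup>2 = (a - s) / (4 * (s - 1)\<^sup>2 * s)"
  proof -
    have "((a - s) / (2 * (1 - s) * sqrt (s * (a - s))))\<^sup>2 = (a - s)\<^sup>2 / (4 * (1 - s)\<^sup>2 * (s * (a - s)))"
      using assms by (simp add: power2_eq_square algebra_simps)
    also have "\<dots> = (a - s) / (4 * (s - 1)\<^sup>2 * s)"
      using assms by (simp add: power2_commute[of s 1] divide_simps) (simp add: power2_eq_square)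
    finally show ?thesis .
  qed
  show "0 \<le> (a - s) / (2 * (1 - s) * sqrt (s * (a - s)))"
    using assms by simp
qed

lemma has_real_derivative_p1_primitive:
  assumes "0 < s" "s < a" "a < 1"
  shows "(p1_primitive a has_real_derivative p1 a s) (at s)"
proof -
  define w where "w x = (1 - a) * x / (a * (1 - x))" for x
  define R where "R = sqrt (s * (a - s))"
  have "0 < R"
    using assms by (simp add: R_def)
  have "0 < w s" "w s < 1"
    using assms by (auto simp: w_def divide_simps algebra_simps)
  moreover have "((\<lambda>x. x / a) has_real_derivative 1 / a) (at s)"
    using assms by (auto intro!: derivative_eq_intros)
  moreover have "(w has_real_derivative (1 - a) / (a * (1 - s)\<^sup>2)) (at s)"
    unfolding w_def using assms
    by (auto intro!: derivative_eq_intros simp: divide_simps power2_eq_square) (simp add: algebra_simps)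
  ultimately have deriv: "(p1_primitive a has_real_derivative
      (1 / a) / (2 * sqrt (s / a * (1 - s / a)))
      - sqrt (1 - a) * ((1 - a) / (a * (1 - s)\<^sup>2) / (2 * sqrt (w s * (1 - w s))))) (at s)"
    unfolding p1_primitive_def w_def[symmetric] using assms
    by (intro DERIV_diff DERIV_cmult DERIV_arcsin_sqrt) auto
  have "s / a * (1 - s / a) = (R / a)\<^sup>2"
    using assms by (simp add: R_def field_simps power2_eq_square)
  then have sqrt1: "sqrt (s / a * (1 - s / a)) = R / a"
    using assms \<open>0 < R\<close> by simp
  have "w s * (1 - w s) = (sqrt (1 - a) * R / (a * (1 - s)))\<^sup>2"
    using assms by (simp add: w_def R_def field_simps power2_eq_square)
  then have sqrt2: "sqrt (w s * (1 - w s)) = sqrt (1 - a) * R / (a * (1 - s))"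
    using assms \<open>0 < R\<close> by simp
  have "(1 / a) / (2 * sqrt (s / a * (1 - s / a)))
      - sqrt (1 - a) * ((1 - a) / (a * (1 - s)\<^sup>2) / (2 * sqrt (w s * (1 - w s))))
      = 1 / (2 * R) - (1 - a) / (2 * (1 - s) * R)"
    unfolding sqrt1 sqrt2 using assms \<open>0 < R\<close> by (simp add: power2_eq_square)
  also have "\<dots> = (a - s) / (2 * (1 - s) * R)"
    using assms \<open>0 < R\<close> by (simp add: field_simps)
  also have "\<dots> = p1 a s"
    using p1_eq[OF assms] by (simp add: R_def)
  finally show ?thesis
    using deriv by simp
qed

lemma p1_has_integral:
  assumes "0 < a" "a < 1"
  shows "(p1 a has_integral pi / 2 * (1 - sqrt (1 - a))) {0..a}"
proof -
  have "(p1 a has_integral p1_primitive a a - p1_primitive a 0) {0..a}"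
    using assms continuous_on_p1_primitive has_real_derivative_p1_primitive
    by (intro fundamental_theorem_of_calculus_interior)
       (auto simp: has_real_derivative_iff_has_vector_derivative)
  then show ?thesis
    using assms by (simp add: p1_primitive_self)
qed

lemma J1_eq:
  assumes "0 \<le> a" "a < 1"
  shows "J1 a = 1 - sqrt (1 - a)"
proof (cases "a = 0")
  case False
  with assms have integral: "integral {0..a} (p1 a) = pi / 2 * (1 - sqrt (1 - a))"
    by (intro integral_unique p1_has_integral) auto
  show ?thesis
    unfolding J1_def integral by simp
qed (simp add: J1_def)

lemma p23_scale:
  assumes "fL \<le> 1"
  shows "p23 f1 f2 f3 fL (r * (1 - fL)) = (\<lambda>s. sqrt (1 - fL) * p23 f1 f2 f3 0 r s)"
proof
  fix s
  have "- ((fL - 1) * s + r * (1 - fL)) / (4 * (f3 - s) * (s - f1) * (s - f2))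
      = (1 - fL) * (- ((0 - 1) * s + r) / (4 * (f3 - s) * (s - f1) * (s - f2)))"
    by (simp add: algebra_simps)
  then show "p23 f1 f2 f3 fL (r * (1 - fL)) s = sqrt (1 - fL) * p23 f1 f2 f3 0 r s"
    unfolding p23_def by (simp only: real_sqrt_mult)
qed

lemma J_map_on_line:
  assumes "0 \<le> fL" "fL < 1" "gL / (1 - fL) = r"
  shows "J_map f1 f2 f3 fL gL
    = (1, 0, 0) + sqrt (1 - fL) *\<^sub>R (-1, J2 f1 f2 f3 0 r, J3 f1 f2 f3 0 r)"
proof -
  have "gL = r * (1 - fL)"
    using assms(2,3) by (simp add: field_simps)
  then show ?thesis
    using assms by (simp add: J_map_def J1_eq J2_def J3_def p23_scale)
qed

lemma fst_lame_image_nonneg: "(fL, gL) \<in> lame_image f1 f2 f3 h \<Longrightarrow> 0 \<le> fL"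
  by (auto simp: lame_image_def F_L_def)

theorem lemma14:
  fixes f1 f2 f3 h r2 :: real
  assumes "0 < f1" and "f1 < f2" and "f2 < f3" and "2 * h = 1"
  shows "\<exists>a d :: real \<times> real \<times> real. d \<noteq> 0 \<and>
           (\<forall>(fL, gL) \<in> lame_image f1 f2 f3 h.
              fL < 1 \<and> fL = 1 - gL / r2 \<and> gL / (1 - fL) = r2 \<longrightarrow>
              (\<exists>t::real. J_map f1 f2 f3 fL gL = a + t *\<^sub>R d))"
proof (intro exI conjI)
  show "((-1, J2 f1 f2 f3 0 r2, J3 f1 f2 f3 0 r2) :: real \<times> real \<times> real) \<noteq> 0"
    by (simp add: zero_prod_def)
  show "\<forall>(fL, gL) \<in> lame_image f1 f2 f3 h.
      fL < 1 \<and> fL = 1 - gL / r2 \<and> gL / (1 - fL) = r2 \<longrightarrow>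
      (\<exists>t. J_map f1 f2 f3 fL gL = (1, 0, 0) + t *\<^sub>R (-1, J2 f1 f2 f3 0 r2, J3 f1 f2 f3 0 r2))"
    using J_map_on_line[of _ _ r2 f1 f2 f3] fst_lame_image_nonneg by blast
qed

end
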